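(* For each $D\in\mathbb N$ let $H^{(D)}$ be a random Hermitian $D\times D$ matrix satisfying Assumptions S1–S4, with an orthonormal eigenbasis $\phi_1,\dots,\phi_D$, and let $D_0:(0,\infty)^2\to\mathbb N$ be a function such that for all $\tau,\alpha>0$, all $D\ge D_0(\tau,\alpha)$ and all $n\in[D]$, $\mathbb P(\|\phi_n\|_\infty>D^{\tau-1/2})\le D^{-\alpha}$ (such a function exists by the Ajanki–Erdős–Krüger delocalization theorem). Let $\tau>0$, $\alpha>1$, $D\ge D_0(\tau,\alpha)$, and let $B$ be a Hermitian $D\times D$ matrix. Then with probability at least $1-D^{-\alpha+1}$, for every macro state $\mu$, $$|M_{\mu B}|\ge\max\Bigl\{b^+_{\min},\frac{\mathrm{tr}(B^+)}{d_\mu}\Bigl(1-\frac{D-d_\mu}{D^{1-2\tau}}\Bigr)\Bigr\}-\min\Bigl\{b^-_{\max},\frac{\mathrm{tr}(B^-)}{d_\mu}\Bigr\},$$ and for all macro states $\mu,\nu$, $$M_{\mu\nu}\ge\frac{d_\nu}{d_\mu}\Bigl(1-\frac{D-d_\mu}{D^{1-2\tau}}\Bigr)\quad\text{and}\quad M_{\mu\nu}\ge1-\frac{D-d_\nu}{D^{1-2\tau}}.$$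
   Context: Setting: $\mathcal H=\mathbb C^D$ with standard basis; $[D]$ partitioned into consecutive blocks $I_\nu$ (macro states), $\mathcal H_\nu=\mathrm{span}\{|j\rangle:j\in I_\nu\}$, $d_\nu=\dim\mathcal H_\nu$, $P_\nu$ orthogonal projection. Here $M_{\mu B}=\frac1{d_\mu}\sum_{n=1}^D\langle\phi_n|P_\mu|\phi_n\rangle\langle\phi_n|B|\phi_n\rangle$ and $M_{\mu\nu}=M_{\mu P_\nu}$ (for non-degenerate $H$ this equals $\frac1{d_\mu}\sum_e\mathrm{tr}(P_\mu\Pi_eB\Pi_e)$). $B^\pm$ are positive/negative parts of $B$, $b^+_{\min}$ smallest eigenvalue of $B^+$, $b^-_{\max}$ largest eigenvalue of $B^-$. $\|\phi\|_\infty=\max_j|\phi(j)|$. Fix parameters $p,P>0$, $L\in\mathbb N$, and a sequence $(\mu_k)_{k\in\mathbb N}$ of nonnegative reals, independent of $D$. S1: $H^{(D)}=(h_{ij})$ is of Wigner type (centered entries, $(h_{ij})_{i\le j}$ independent) and $\sigma_{ij}^2:=\mathbb E|h_{ij}|^2\le 1/D$ for all $i,j$. S2: the matrix $S=(\sigma_{ij}^2)$ satisfies $(S^L)_{ij}\ge p/D$ for all $i,j$. S3: the unique solution $m=(m_1,\dots,m_D):\mathbb H\to\mathbb H^D$ ($\mathbb H$ the complex upper half-plane) of the vector Dyson equation $-1/m_i(z)=z+\sum_j\sigma_{ij}^2m_j(z)$ satisfies $|m_i(z)|\le P$ for all $i$ and $z\in\mathbb H$. S4: $\mathbb E|h_{ij}|^k\le\mu_k\sigma_{ij}^k$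 for all $k\in\mathbb N$, $i,j$. *)

theory Defs
  imports "HOL-Probability.Probability"
begin

text \<open>Matrices of size D x D are functions nat => nat => complex, only entries with
indices < D are relevant; vectors are functions nat => complex. Indices run over 0..<D.\<close>

definition hermitian :: "nat \<Rightarrow> (nat \<Rightarrow> nat \<Rightarrow> complex) \<Rightarrow> bool" where
  "hermitian D A \<longleftrightarrow> (\<forall>i<D. \<forall>j<D. A j i = cnj (A i j))"

definition mat_vec :: "nat \<Rightarrow> (nat \<Rightarrow> nat \<Rightarrow> complex) \<Rightarrow> (nat \<Rightarrow> complex) \<Rightarrow> nat \<Rightarrow> complex" where
  "mat_vec D A v = (\<lambda>i. \<Sum>j<D. A i j * v j)"

definition cinner :: "nat \<Rightarrow> (nat \<Rightarrow> complex) \<Rightarrow> (nat \<Rightarrow> complex) \<Rightarrow> complex" where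
  "cinner D u v = (\<Sum>j<D. cnj (u j) * v j)"

definition orthonormal_family :: "nat \<Rightarrow> (nat \<Rightarrow> nat \<Rightarrow> complex) \<Rightarrow> bool" where
  "orthonormal_family D \<phi> \<longleftrightarrow>
     (\<forall>n<D. \<forall>m<D. cinner D (\<phi> n) (\<phi> m) = (if n = m then 1 else 0))"

definition is_eigenbasis :: "nat \<Rightarrow> (nat \<Rightarrow> nat \<Rightarrow> complex) \<Rightarrow> (nat \<Rightarrow> nat \<Rightarrow> complex) \<Rightarrow> bool" where
  "is_eigenbasis D A \<phi> \<longleftrightarrow> orthonormal_family D \<phi> \<and>
     (\<forall>n<D. \<exists>c. \<forall>i<D. mat_vec D A (\<phi> n) i = c * \<phi> n i)"

definition is_eigendecomp :: "nat \<Rightarrow> (nat \<Rightarrow> nat \<Rightarrow> complex) \<Rightarrow> (nat \<Rightarrow> nat \<Rightarrow> complex) \<Rightarrow> (nat \<Rightarrow> real) \<Rightarrow> bool" where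
  "is_eigendecomp D A \<psi> \<beta> \<longleftrightarrow> orthonormal_family D \<psi> \<and>
     (\<forall>n<D. \<forall>i<D. mat_vec D A (\<psi> n) i = complex_of_real (\<beta> n) * \<psi> n i)"

definition real_eigenvalues :: "nat \<Rightarrow> (nat \<Rightarrow> nat \<Rightarrow> complex) \<Rightarrow> real set" where
  "real_eigenvalues D A = {l. \<exists>v. (\<exists>i<D. v i \<noteq> 0) \<and>
       (\<forall>i<D. mat_vec D A v i = complex_of_real l * v i)}"

definition pos_part :: "nat \<Rightarrow> (nat \<Rightarrow> nat \<Rightarrow> complex) \<Rightarrow> (nat \<Rightarrow> real) \<Rightarrow> nat \<Rightarrow> nat \<Rightarrow> complex" where
  "pos_part D \<psi> \<beta> = (\<lambda>i j. \<Sum>k<D. complex_of_real (max (\<beta> k) 0) * \<psi> k i * cnj (\<psi> k j))"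

definition neg_part :: "nat \<Rightarrow> (nat \<Rightarrow> nat \<Rightarrow> complex) \<Rightarrow> (nat \<Rightarrow> real) \<Rightarrow> nat \<Rightarrow> nat \<Rightarrow> complex" where
  "neg_part D \<psi> \<beta> = (\<lambda>i j. \<Sum>k<D. complex_of_real (max (- \<beta> k) 0) * \<psi> k i * cnj (\<psi> k j))"

definition mtrace :: "nat \<Rightarrow> (nat \<Rightarrow> nat \<Rightarrow> complex) \<Rightarrow> complex" where
  "mtrace D A = (\<Sum>i<D. A i i)"

definition sup_norm :: "nat \<Rightarrow> (nat \<Rightarrow> complex) \<Rightarrow> real" where
  "sup_norm D v = Max ((\<lambda>j. cmod (v j)) ` {..<D})"

text \<open>Macro states: consecutive blocks I_nu = {a nu ..< a (nu+1)}, nu < K, of [D].\<close>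
definition macro_partition :: "nat \<Rightarrow> nat \<Rightarrow> (nat \<Rightarrow> nat) \<Rightarrow> bool" where
  "macro_partition D K a \<longleftrightarrow> a 0 = 0 \<and> a K = D \<and> (\<forall>\<nu><K. a \<nu> < a (Suc \<nu>))"

definition block :: "(nat \<Rightarrow> nat) \<Rightarrow> nat \<Rightarrow> nat set" where
  "block a \<nu> = {a \<nu> ..< a (Suc \<nu>)}"

definition bdim :: "(nat \<Rightarrow> nat) \<Rightarrow> nat \<Rightarrow> nat" where
  "bdim a \<nu> = a (Suc \<nu>) - a \<nu>"

definition proj :: "(nat \<Rightarrow> nat) \<Rightarrow> nat \<Rightarrow> nat \<Rightarrow> nat \<Rightarrow> complex" where
  "proj a \<nu> = (\<lambda>i j. if i = j \<and> i \<in> block a \<nu> then 1 else 0)"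

text \<open>Expectation <v|A|v> (real part; real for Hermitian A).\<close>
definition qform :: "nat \<Rightarrow> (nat \<Rightarrow> nat \<Rightarrow> complex) \<Rightarrow> (nat \<Rightarrow> complex) \<Rightarrow> real" where
  "qform D A v = Re (\<Sum>i<D. \<Sum>j<D. cnj (v i) * A i j * v j)"

definition Mmu :: "nat \<Rightarrow> (nat \<Rightarrow> nat) \<Rightarrow> (nat \<Rightarrow> nat \<Rightarrow> complex) \<Rightarrow> nat \<Rightarrow> (nat \<Rightarrow> nat \<Rightarrow> complex) \<Rightarrow> real" where
  "Mmu D a \<phi> \<mu> B = (1 / real (bdim a \<mu>)) * (\<Sum>n<D. qform D (proj a \<mu>) (\<phi> n) * qform D B (\<phi> n))"

fun matpow :: "nat \<Rightarrow> (nat \<Rightarrow> nat \<Rightarrow> real) \<Rightarrow> nat \<Rightarrow> nat \<Rightarrow> nat \<Rightarrow> real" where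
  "matpow D S 0 = (\<lambda>i j. if i = j then 1 else 0)"
| "matpow D S (Suc L) = (\<lambda>i j. \<Sum>k<D. matpow D S L i k * S k j)"

definition sigma2 :: "'w measure \<Rightarrow> ('w \<Rightarrow> nat \<Rightarrow> nat \<Rightarrow> complex) \<Rightarrow> nat \<Rightarrow> nat \<Rightarrow> real" where
  "sigma2 M H i j = enn2real (\<integral>\<^sup>+ \<omega>. ennreal ((cmod (H \<omega> i j))\<^sup>2) \<partial>M)"

text \<open>S3: every solution w in H^D of the vector Dyson equation at z in H is bounded by P
(the solution is unique for each z, so this is the bound on the unique solution m(z)).\<close>
definition dyson_bounded :: "nat \<Rightarrow> (nat \<Rightarrow> nat \<Rightarrow> real) \<Rightarrow> real \<Rightarrow> bool" where
  "dyson_bounded D s P \<longleftrightarrow> (\<forall>z w. Im z > 0 \<longrightarrow>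
      (\<forall>i<D. Im (w i) > 0 \<and> - 1 / w i = z + (\<Sum>j<D. complex_of_real (s i j) * w j)) \<longrightarrow>
      (\<forall>i<D. cmod (w i) \<le> P))"

end

theory Submission
  imports Defs "Jordan_Normal_Form.Determinant"
begin

(* Let p_n = <phi_n|P_mu|phi_n> = sum over i in I_mu of |phi_n(i)|^2 be the occupation of the
   macro state mu by the eigenvector phi_n. Completeness of the orthonormal basis gives
   sum_n p_n = d_mu and 0 <= p_n <= 1; if every phi_n is delocalized, |phi_n(j)|^2 <= D^(2 tau - 1),
   then the mass of phi_n outside I_mu is at most (D - d_mu) / D^(1 - 2 tau), which bounds p_n
   from below. Now d_mu M_{mu B} = sum_n p_n (<phi_n|B^+|phi_n> - <phi_n|B^-|phi_n>), where the
   numbers <phi_n|B^+-|phi_n> lie between the extreme eigenvalues of B^+- and sum to tr B^+-;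
   comparing the weighted sums with these bounds gives all three inequalities (for M_{mu nu}
   take B = P_nu). A union bound over n shows that all eigenvectors are delocalized with
   probability at least 1 - D D^(-alpha). Assumptions S1-S4 enter only through the
   delocalization hypothesis, which is taken as given, and the hermiticity of B only through
   its eigendecomposition. *)

lemma orthonormal_family_complete:
  assumes on: "orthonormal_family D u" and ij: "i < D" "j < D"
  shows "(\<Sum>n<D. u n i * cnj (u n j)) = (if i = j then 1 else 0)"
proof -
  \<comment> \<open>The u n are the columns of a square matrix U with U* U = 1; a one-sided inverse
      of a square matrix is two-sided, so also U U* = 1.\<close>
  define U :: "complex mat" where "U = mat D D (\<lambda>(i, n). u n i)"
  define U' :: "complex mat" where "U' = mat D D (\<lambda>(n, i). cnj (u n i))"
  have "U' * U = 1\<^sub>m D"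
  proof (rule eq_matI)
    fix n m assume nm: "n < dim_row (1\<^sub>m D)" "m < dim_col (1\<^sub>m D)"
    then have "(U' * U) $$ (n, m) = (\<Sum>i<D. cnj (u n i) * u m i)"
      by (auto simp: U_def U'_def scalar_prod_def lessThan_atLeast0 intro!: sum.cong)
    also have "\<dots> = (if n = m then 1 else 0)"
      using on nm unfolding orthonormal_family_def cinner_def by auto
    finally show "(U' * U) $$ (n, m) = 1\<^sub>m D $$ (n, m)" using nm by auto
  qed (auto simp: U_def U'_def)
  then have "U * U' = 1\<^sub>m D"
    by (rule mat_mult_left_right_inverse[rotated 2]) (auto simp: U_def U'_def)
  then have "(U * U') $$ (i, j) = 1\<^sub>m D $$ (i, j)" by simp
  then show ?thesis using ij
    by (auto simp: U_def U'_def scalar_prod_def lessThan_atLeast0 split: if_splits)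
qed

lemma orthonormal_family_norm:
  assumes "orthonormal_family D u" and "n < D"
  shows "(\<Sum>i<D. (cmod (u n i))\<^sup>2) = 1"
proof -
  have "cinner D (u n) (u n) = 1" using assms unfolding orthonormal_family_def by auto
  then have "complex_of_real (\<Sum>i<D. (cmod (u n i))\<^sup>2) = 1"
    by (simp only: of_real_sum complex_norm_square cinner_def mult.commute)
  then show ?thesis by (metis of_real_eq_1_iff)
qed

lemma orthonormal_family_parseval:
  assumes on: "orthonormal_family D u"
  shows "(\<Sum>n<D. (cmod (cinner D (u n) v))\<^sup>2) = (\<Sum>i<D. (cmod (v i))\<^sup>2)"
proof -
  have "(\<Sum>n<D. cinner D (u n) v * cnj (cinner D (u n) v))
      = (\<Sum>n<D. \<Sum>i<D. \<Sum>j<D. v i * cnj (v j) * (u n j * cnj (u n i)))"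
    by (simp add: cinner_def sum_product cnj_sum mult_ac)
  also have "\<dots> = (\<Sum>i<D. \<Sum>j<D. \<Sum>n<D. v i * cnj (v j) * (u n j * cnj (u n i)))"
    by (rule trans[OF sum.swap sum.cong[OF refl sum.swap]])
  also have "\<dots> = (\<Sum>i<D. \<Sum>j<D. v i * cnj (v j) * (\<Sum>n<D. u n j * cnj (u n i)))"
    by (simp add: sum_distrib_left)
  also have "\<dots> = (\<Sum>i<D. v i * cnj (v i))"
    by (simp add: orthonormal_family_complete[OF on] if_distrib cong: if_cong)
  finally have "complex_of_real (\<Sum>n<D. (cmod (cinner D (u n) v))\<^sup>2)
      = complex_of_real (\<Sum>i<D. (cmod (v i))\<^sup>2)"
    by (simp only: of_real_sum complex_norm_square)
  then show ?thesis by (simp only: of_real_eq_iff)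
qed

lemma sum_qform_eq_mtrace:
  assumes on: "orthonormal_family D \<phi>"
  shows "(\<Sum>n<D. qform D A (\<phi> n)) = Re (mtrace D A)"
proof -
  have "(\<Sum>n<D. \<Sum>i<D. \<Sum>j<D. cnj (\<phi> n i) * A i j * \<phi> n j)
      = (\<Sum>n<D. \<Sum>i<D. \<Sum>j<D. A i j * (\<phi> n j * cnj (\<phi> n i)))"
    by (simp add: mult_ac)
  also have "\<dots> = (\<Sum>i<D. \<Sum>j<D. \<Sum>n<D. A i j * (\<phi> n j * cnj (\<phi> n i)))"
    by (rule trans[OF sum.swap sum.cong[OF refl sum.swap]])
  also have "\<dots> = (\<Sum>i<D. A i i)"
    by (simp add: sum_distrib_left[symmetric] orthonormal_family_complete[OF on] if_distrib cong: if_cong)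
  finally show ?thesis unfolding qform_def mtrace_def by (simp flip: Re_sum)
qed

definition spectral_mat :: "nat \<Rightarrow> (nat \<Rightarrow> nat \<Rightarrow> complex) \<Rightarrow> (nat \<Rightarrow> real) \<Rightarrow> nat \<Rightarrow> nat \<Rightarrow> complex" where
  "spectral_mat D \<psi> m = (\<lambda>i j. \<Sum>k<D. complex_of_real (m k) * \<psi> k i * cnj (\<psi> k j))"

lemma pos_part_eq_spectral_mat: "pos_part D \<psi> \<beta> = spectral_mat D \<psi> (\<lambda>k. max (\<beta> k) 0)"
  by (simp add: pos_part_def spectral_mat_def)

lemma neg_part_eq_spectral_mat: "neg_part D \<psi> \<beta> = spectral_mat D \<psi> (\<lambda>k. max (- \<beta> k) 0)"
  by (simp add: neg_part_def spectral_mat_def)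

lemma qform_spectral_mat:
  "qform D (spectral_mat D \<psi> m) v = (\<Sum>k<D. m k * (cmod (cinner D (\<psi> k) v))\<^sup>2)"
proof -
  have "(\<Sum>i<D. \<Sum>j<D. cnj (v i) * spectral_mat D \<psi> m i j * v j)
      = (\<Sum>i<D. \<Sum>j<D. \<Sum>k<D. complex_of_real (m k) * (cnj (\<psi> k j) * v j) * cnj (cnj (\<psi> k i) * v i))"
    by (simp add: spectral_mat_def sum_distrib_left sum_distrib_right mult_ac)
  also have "\<dots> = (\<Sum>k<D. \<Sum>i<D. \<Sum>j<D. complex_of_real (m k) * (cnj (\<psi> k j) * v j) * cnj (cnj (\<psi> k i) * v i))"
    by (rule trans[OF sum.cong[OF refl sum.swap] sum.swap])
  also have "\<dots> = (\<Sum>k<D. complex_of_real (m k) * (cinner D (\<psi> k) v * cnj (cinner D (\<psi> k) v)))"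
    by (simp add: cinner_def sum_distrib_left sum_distrib_right cnj_sum mult_ac)
  also have "\<dots> = complex_of_real (\<Sum>k<D. m k * (cmod (cinner D (\<psi> k) v))\<^sup>2)"
    by (simp only: complex_norm_square[symmetric] of_real_sum of_real_mult)
  finally show ?thesis unfolding qform_def by simp
qed

lemma qform_spectral_mat_bounds:
  assumes on: "orthonormal_family D \<psi>" and unit: "(\<Sum>i<D. (cmod (v i))\<^sup>2) = 1"
  shows "Min (m ` {..<D}) \<le> qform D (spectral_mat D \<psi> m) v"
    and "qform D (spectral_mat D \<psi> m) v \<le> Max (m ` {..<D})"
proof -
  have weights: "(\<Sum>k<D. (cmod (cinner D (\<psi> k) v))\<^sup>2) = 1"
    using orthonormal_family_parseval[OF on] unit by simp
  have "Min (m ` {..<D}) = (\<Sum>k<D. Min (m ` {..<D}) * (cmod (cinner D (\<psi> k) v))\<^sup>2)"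
    by (simp add: sum_distrib_left[symmetric] weights)
  also have "\<dots> \<le> (\<Sum>k<D. m k * (cmod (cinner D (\<psi> k) v))\<^sup>2)"
    by (intro sum_mono mult_right_mono) auto
  finally show "Min (m ` {..<D}) \<le> qform D (spectral_mat D \<psi> m) v"
    by (simp add: qform_spectral_mat)
  have "(\<Sum>k<D. m k * (cmod (cinner D (\<psi> k) v))\<^sup>2)
      \<le> (\<Sum>k<D. Max (m ` {..<D}) * (cmod (cinner D (\<psi> k) v))\<^sup>2)"
    by (intro sum_mono mult_right_mono) auto
  also have "\<dots> = Max (m ` {..<D})"
    by (simp add: sum_distrib_left[symmetric] weights)
  finally show "qform D (spectral_mat D \<psi> m) v \<le> Max (m ` {..<D})"
    by (simp add: qform_spectral_mat)
qed

lemma qform_spectral_mat_nonneg: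
  assumes "\<And>k. k < D \<Longrightarrow> 0 \<le> m k"
  shows "0 \<le> qform D (spectral_mat D \<psi> m) v"
  unfolding qform_spectral_mat using assms by (intro sum_nonneg) simp

lemma mat_vec_spectral_mat:
  "mat_vec D (spectral_mat D \<psi> m) v i = (\<Sum>k<D. complex_of_real (m k) * \<psi> k i * cinner D (\<psi> k) v)"
proof -
  have "mat_vec D (spectral_mat D \<psi> m) v i
      = (\<Sum>j<D. \<Sum>k<D. complex_of_real (m k) * \<psi> k i * (cnj (\<psi> k j) * v j))"
    unfolding mat_vec_def spectral_mat_def by (simp add: sum_distrib_left sum_distrib_right mult_ac)
  also have "\<dots> = (\<Sum>k<D. complex_of_real (m k) * \<psi> k i * cinner D (\<psi> k) v)"
    unfolding cinner_def by (subst sum.swap) (simp add: sum_distrib_left)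
  finally show ?thesis .
qed

lemma mat_vec_spectral_mat_basis:
  assumes "orthonormal_family D \<psi>" and "q < D"
  shows "mat_vec D (spectral_mat D \<psi> m) (\<psi> q) i = complex_of_real (m q) * \<psi> q i"
proof -
  have "mat_vec D (spectral_mat D \<psi> m) (\<psi> q) i
      = (\<Sum>k<D. if k = q then complex_of_real (m q) * \<psi> q i else 0)"
    unfolding mat_vec_spectral_mat using assms unfolding orthonormal_family_def
    by (intro sum.cong) auto
  then show ?thesis using assms(2) by simp
qed

lemma cinner_basis_mat_vec_spectral_mat:
  assumes "orthonormal_family D \<psi>" and "q < D"
  shows "cinner D (\<psi> q) (mat_vec D (spectral_mat D \<psi> m) v) = complex_of_real (m q) * cinner D (\<psi> q) v"
proof -
  have "cinner D (\<psi> q) (mat_vec D (spectral_mat D \<psi> m) v)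
      = (\<Sum>j<D. \<Sum>k<D. cnj (\<psi> q j) * (complex_of_real (m k) * \<psi> k j * cinner D (\<psi> k) v))"
    unfolding mat_vec_spectral_mat cinner_def[of D "\<psi> q"] by (simp add: sum_distrib_left)
  also have "\<dots> = (\<Sum>k<D. \<Sum>j<D. cnj (\<psi> q j) * (complex_of_real (m k) * \<psi> k j * cinner D (\<psi> k) v))"
    by (rule sum.swap)
  also have "\<dots> = (\<Sum>k<D. complex_of_real (m k) * cinner D (\<psi> q) (\<psi> k) * cinner D (\<psi> k) v)"
    unfolding cinner_def[of D "\<psi> q"] by (simp add: sum_distrib_left sum_distrib_right mult_ac)
  also have "\<dots> = (\<Sum>k<D. if k = q then complex_of_real (m q) * cinner D (\<psi> q) v else 0)"
    using assms unfolding orthonormal_family_def by (intro sum.cong) auto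
  finally show ?thesis using assms(2) by simp
qed

lemma real_eigenvalues_spectral_mat:
  assumes on: "orthonormal_family D \<psi>"
  shows "real_eigenvalues D (spectral_mat D \<psi> m) = m ` {..<D}"
proof
  show "real_eigenvalues D (spectral_mat D \<psi> m) \<subseteq> m ` {..<D}"
  proof
    fix l assume "l \<in> real_eigenvalues D (spectral_mat D \<psi> m)"
    then obtain v i0 where i0: "i0 < D" "v i0 \<noteq> 0"
      and ev: "\<And>i. i < D \<Longrightarrow> mat_vec D (spectral_mat D \<psi> m) v i = complex_of_real l * v i"
      unfolding real_eigenvalues_def by blast
    show "l \<in> m ` {..<D}"
    proof (rule ccontr)
      assume l: "l \<notin> m ` {..<D}"
      have "cinner D (\<psi> q) v = 0" if q: "q < D" for q
      proof -
        have "cinner D (\<psi> q) (mat_vec D (spectral_mat D \<psi> m) v) = complex_of_real l * cinner D (\<psi> q) v"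
          unfolding cinner_def by (simp add: ev sum_distrib_left mult_ac)
        then have "complex_of_real l * cinner D (\<psi> q) v = complex_of_real (m q) * cinner D (\<psi> q) v"
          by (metis cinner_basis_mat_vec_spectral_mat[OF on q])
        moreover have "l \<noteq> m q" using l q by auto
        ultimately show ?thesis by simp
      qed
      then have "(\<Sum>i<D. (cmod (v i))\<^sup>2) = 0"
        using orthonormal_family_parseval[OF on, of v] by simp
      then show False
        using i0 by (subst (asm) sum_nonneg_eq_0_iff) auto
    qed
  qed
next
  show "m ` {..<D} \<subseteq> real_eigenvalues D (spectral_mat D \<psi> m)"
  proof
    fix l assume "l \<in> m ` {..<D}"
    then obtain q where q: "q < D" "l = m q" by auto
    have "\<exists>i<D. \<psi> q i \<noteq> 0"
    proof (rule ccontr)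
      assume "\<not> (\<exists>i<D. \<psi> q i \<noteq> 0)"
      then have "(\<Sum>i<D. (cmod (\<psi> q i))\<^sup>2) = 0" by simp
      then show False using orthonormal_family_norm[OF on q(1)] by simp
    qed
    then show "l \<in> real_eigenvalues D (spectral_mat D \<psi> m)"
      unfolding real_eigenvalues_def using q mat_vec_spectral_mat_basis[OF on q(1)]
      by (intro CollectI exI[of _ "\<psi> q"]) simp
  qed
qed

lemma is_eigendecomp_spectral_mat:
  assumes eig: "is_eigendecomp D B \<psi> \<beta>" and "i < D" "j < D"
  shows "B i j = spectral_mat D \<psi> \<beta> i j"
proof -
  have on: "orthonormal_family D \<psi>"
    and ev: "\<forall>n<D. \<forall>i<D. mat_vec D B (\<psi> n) i = complex_of_real (\<beta> n) * \<psi> n i"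
    using eig unfolding is_eigendecomp_def by auto
  \<comment> \<open>Expand the j-th unit vector in the basis \<psi> by completeness.\<close>
  have "B i j = (\<Sum>l<D. B i l * (if l = j then 1 else 0))"
    using \<open>j < D\<close> by (simp add: if_distrib cong: if_cong)
  also have "\<dots> = (\<Sum>l<D. \<Sum>k<D. B i l * (\<psi> k l * cnj (\<psi> k j)))"
    using \<open>j < D\<close> by (intro sum.cong refl) (simp add: orthonormal_family_complete[OF on] sum_distrib_left[symmetric])
  also have "\<dots> = (\<Sum>k<D. mat_vec D B (\<psi> k) i * cnj (\<psi> k j))"
    unfolding mat_vec_def by (subst sum.swap) (simp add: sum_distrib_left sum_distrib_right mult_ac)
  also have "\<dots> = spectral_mat D \<psi> \<beta> i j"
    unfolding spectral_mat_def using ev \<open>i < D\<close> by (intro sum.cong refl) simp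
  finally show ?thesis .
qed

lemma qform_cong:
  assumes "\<And>i j. i < D \<Longrightarrow> j < D \<Longrightarrow> A i j = C i j"
  shows "qform D A v = qform D C v"
  unfolding qform_def using assms by (intro arg_cong[where f = Re] sum.cong refl) auto

lemma qform_eq_pos_part_minus_neg_part:
  assumes "is_eigendecomp D B \<psi> \<beta>"
  shows "qform D B v = qform D (pos_part D \<psi> \<beta>) v - qform D (neg_part D \<psi> \<beta>) v"
proof -
  have "qform D B v = qform D (spectral_mat D \<psi> \<beta>) v"
    by (rule qform_cong) (rule is_eigendecomp_spectral_mat[OF assms])
  also have "\<dots> = (\<Sum>k<D. (max (\<beta> k) 0 - max (- \<beta> k) 0) * (cmod (cinner D (\<psi> k) v))\<^sup>2)"
    unfolding qform_spectral_mat by (intro sum.cong refl) (auto simp: max_def)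
  finally show ?thesis
    by (simp add: pos_part_eq_spectral_mat neg_part_eq_spectral_mat qform_spectral_mat
        left_diff_distrib sum_subtractf)
qed

lemma qform_pos_part_bounds:
  assumes "orthonormal_family D \<psi>" and "(\<Sum>i<D. (cmod (v i))\<^sup>2) = 1"
  shows "0 \<le> qform D (pos_part D \<psi> \<beta>) v"
    and "Min (real_eigenvalues D (pos_part D \<psi> \<beta>)) \<le> qform D (pos_part D \<psi> \<beta>) v"
  unfolding pos_part_eq_spectral_mat real_eigenvalues_spectral_mat[OF assms(1)]
  by (auto intro: qform_spectral_mat_nonneg qform_spectral_mat_bounds(1)[OF assms])

lemma qform_neg_part_bounds:
  assumes "orthonormal_family D \<psi>" and "(\<Sum>i<D. (cmod (v i))\<^sup>2) = 1"
  shows "0 \<le> qform D (neg_part D \<psi> \<beta>) v"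
    and "qform D (neg_part D \<psi> \<beta>) v \<le> Max (real_eigenvalues D (neg_part D \<psi> \<beta>))"
  unfolding neg_part_eq_spectral_mat real_eigenvalues_spectral_mat[OF assms(1)]
  by (auto intro: qform_spectral_mat_nonneg qform_spectral_mat_bounds(2)[OF assms])

lemma macro_partition_mono:
  assumes part: "macro_partition D K a" and "\<mu> \<le> \<nu>" "\<nu> \<le> K"
  shows "a \<mu> \<le> a \<nu>"
  using assms(2,3)
proof (induction \<nu>)
  case (Suc \<nu>)
  show ?case
  proof (cases "\<mu> = Suc \<nu>")
    case False
    then have "a \<mu> \<le> a \<nu>" using Suc by auto
    also have "a \<nu> < a (Suc \<nu>)" using part Suc.prems unfolding macro_partition_def by auto
    finally show ?thesis by simp
  qed simp
qed simp

lemma macro_partition_block: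
  assumes part: "macro_partition D K a" and "\<mu> < K"
  shows "block a \<mu> \<subseteq> {..<D}" and "0 < bdim a \<mu>"
proof -
  have "a (Suc \<mu>) \<le> D"
    using macro_partition_mono[OF part, of "Suc \<mu>" K] assms part unfolding macro_partition_def by simp
  then show "block a \<mu> \<subseteq> {..<D}" unfolding block_def by auto
  show "0 < bdim a \<mu>" using assms unfolding macro_partition_def bdim_def by simp
qed

lemma card_block: "card (block a \<nu>) = bdim a \<nu>"
  by (simp add: block_def bdim_def)

lemma qform_proj:
  assumes "block a \<nu> \<subseteq> {..<D}"
  shows "qform D (proj a \<nu>) v = (\<Sum>i\<in>block a \<nu>. (cmod (v i))\<^sup>2)"
proof -
  have "(\<Sum>i<D. \<Sum>j<D. cnj (v i) * proj a \<nu> i j * v j)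
      = (\<Sum>i<D. if i \<in> block a \<nu> then complex_of_real ((cmod (v i))\<^sup>2) else 0)"
  proof (intro sum.cong refl)
    fix i assume "i \<in> {..<D}"
    have "(\<Sum>j<D. cnj (v i) * proj a \<nu> i j * v j)
        = (\<Sum>j<D. if j = i then (if i \<in> block a \<nu> then cnj (v i) * v i else 0) else 0)"
      unfolding proj_def by (intro sum.cong) auto
    then have "(\<Sum>j<D. cnj (v i) * proj a \<nu> i j * v j)
        = (if i \<in> block a \<nu> then cnj (v i) * v i else 0)"
      using \<open>i \<in> {..<D}\<close> by simp
    then show "(\<Sum>j<D. cnj (v i) * proj a \<nu> i j * v j)
        = (if i \<in> block a \<nu> then complex_of_real ((cmod (v i))\<^sup>2) else 0)"
      by (simp only: complex_norm_square mult.commute)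
  qed
  also have "\<dots> = complex_of_real (\<Sum>i\<in>block a \<nu>. (cmod (v i))\<^sup>2)"
    using assms by (simp add: sum.If_cases Int_absorb1)
  finally show ?thesis unfolding qform_def by (simp only: Re_complex_of_real)
qed

lemma mtrace_proj:
  assumes "block a \<nu> \<subseteq> {..<D}"
  shows "Re (mtrace D (proj a \<nu>)) = real (bdim a \<nu>)"
  using assms by (simp add: mtrace_def proj_def sum.If_cases Int_absorb1 card_block)

lemma sum_sq_subset_le_1:
  fixes D :: nat
  assumes unit: "(\<Sum>i<D. (cmod (v i))\<^sup>2) = 1" and I: "I \<subseteq> {..<D}"
  shows "(\<Sum>i\<in>I. (cmod (v i))\<^sup>2) \<le> 1"
proof -
  have "(\<Sum>i\<in>I. (cmod (v i))\<^sup>2) \<le> (\<Sum>i<D. (cmod (v i))\<^sup>2)"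
    by (rule sum_mono2) (use I in auto)
  then show ?thesis using unit by simp
qed

lemma sum_sq_subset_ge_delocalized:
  assumes unit: "(\<Sum>i<D. (cmod (v i))\<^sup>2) = 1" and I: "I \<subseteq> {..<D}"
    and deloc: "\<And>j. j < D \<Longrightarrow> (cmod (v j))\<^sup>2 \<le> \<epsilon>"
  shows "1 - real (D - card I) * \<epsilon> \<le> (\<Sum>i\<in>I. (cmod (v i))\<^sup>2)"
proof -
  have "(\<Sum>i\<in>{..<D} - I. (cmod (v i))\<^sup>2) \<le> (\<Sum>i\<in>{..<D} - I. \<epsilon>)"
    using deloc by (intro sum_mono) auto
  also have "\<dots> = real (D - card I) * \<epsilon>"
    using I finite_subset[OF I] by (simp add: card_Diff_subset)
  finally show ?thesis
    using sum.subset_diff[OF I finite_lessThan, of "\<lambda>i. (cmod (v i))\<^sup>2"] unit by linarith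
qed

lemma weighted_sum_ge_max:
  fixes p x :: "'a \<Rightarrow> real"
  assumes "\<And>n. n \<in> A \<Longrightarrow> 0 \<le> p n \<and> c \<le> p n"
    and "\<And>n. n \<in> A \<Longrightarrow> 0 \<le> x n \<and> l \<le> x n"
  shows "max (l * sum p A) (c * sum x A) \<le> (\<Sum>n\<in>A. p n * x n)"
proof -
  have "l * sum p A = (\<Sum>n\<in>A. p n * l)" by (simp add: sum_distrib_left mult.commute)
  also have "\<dots> \<le> (\<Sum>n\<in>A. p n * x n)" using assms by (intro sum_mono mult_left_mono) auto
  finally have "l * sum p A \<le> (\<Sum>n\<in>A. p n * x n)" .
  moreover have "c * sum x A \<le> (\<Sum>n\<in>A. p n * x n)"
    unfolding sum_distrib_left using assms by (intro sum_mono mult_right_mono) auto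
  ultimately show ?thesis by simp
qed

lemma weighted_sum_le_min:
  fixes p y :: "'a \<Rightarrow> real"
  assumes "\<And>n. n \<in> A \<Longrightarrow> 0 \<le> p n \<and> p n \<le> 1"
    and "\<And>n. n \<in> A \<Longrightarrow> 0 \<le> y n \<and> y n \<le> u"
  shows "(\<Sum>n\<in>A. p n * y n) \<le> min (u * sum p A) (sum y A)"
proof -
  have "(\<Sum>n\<in>A. p n * y n) \<le> (\<Sum>n\<in>A. p n * u)" using assms by (intro sum_mono mult_left_mono) auto
  also have "\<dots> = u * sum p A" by (simp add: sum_distrib_left mult.commute)
  finally have "(\<Sum>n\<in>A. p n * y n) \<le> u * sum p A" .
  moreover have "(\<Sum>n\<in>A. p n * y n) \<le> sum y A"
    using assms by (intro sum_mono mult_left_le_one_le) auto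
  ultimately show ?thesis by simp
qed

lemma macro_occupation_bounds:
  assumes part: "macro_partition D K a" and "\<mu> < K" and on: "orthonormal_family D \<phi>"
    and deloc: "\<And>j. j < D \<Longrightarrow> (cmod (\<phi> n j))\<^sup>2 \<le> \<epsilon>" and n: "n < D"
  shows "0 \<le> qform D (proj a \<mu>) (\<phi> n)"
    and "qform D (proj a \<mu>) (\<phi> n) \<le> 1"
    and "1 - real (D - bdim a \<mu>) * \<epsilon> \<le> qform D (proj a \<mu>) (\<phi> n)"
  using macro_partition_block(1)[OF part \<open>\<mu> < K\<close>] orthonormal_family_norm[OF on n] deloc
  by (simp_all add: qform_proj sum_nonneg sum_sq_subset_le_1 flip: card_block
      add: sum_sq_subset_ge_delocalized)

lemma sum_macro_occupation:
  assumes "macro_partition D K a" and "\<mu> < K" and "orthonormal_family D \<phi>"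
  shows "(\<Sum>n<D. qform D (proj a \<mu>) (\<phi> n)) = real (bdim a \<mu>)"
  using macro_partition_block(1)[OF assms(1,2)]
  by (simp add: sum_qform_eq_mtrace[OF assms(3)] mtrace_proj)

lemma Mmu_observable_lower_bound:
  assumes part: "macro_partition D K a" and \<mu>: "\<mu> < K" and eig: "is_eigendecomp D B \<psi> \<beta>"
    and on: "orthonormal_family D \<phi>"
    and deloc: "\<And>n j. n < D \<Longrightarrow> j < D \<Longrightarrow> (cmod (\<phi> n j))\<^sup>2 \<le> \<epsilon>"
  shows "max (Min (real_eigenvalues D (pos_part D \<psi> \<beta>)))
               (Re (mtrace D (pos_part D \<psi> \<beta>)) / real (bdim a \<mu>) * (1 - real (D - bdim a \<mu>) * \<epsilon>))
           - min (Max (real_eigenvalues D (neg_part D \<psi> \<beta>)))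
               (Re (mtrace D (neg_part D \<psi> \<beta>)) / real (bdim a \<mu>))
         \<le> Mmu D a \<phi> \<mu> B"
proof -
  define p where "p n = qform D (proj a \<mu>) (\<phi> n)" for n
  define x where "x n = qform D (pos_part D \<psi> \<beta>) (\<phi> n)" for n
  define y where "y n = qform D (neg_part D \<psi> \<beta>) (\<phi> n)" for n
  define d where "d = real (bdim a \<mu>)"
  define c where "c = 1 - real (D - bdim a \<mu>) * \<epsilon>"
  define mn where "mn = Min (real_eigenvalues D (pos_part D \<psi> \<beta>))"
  define mx where "mx = Max (real_eigenvalues D (neg_part D \<psi> \<beta>))"
  define Tp where "Tp = Re (mtrace D (pos_part D \<psi> \<beta>))"
  define Tm where "Tm = Re (mtrace D (neg_part D \<psi> \<beta>))"
  have on_\<psi>: "orthonormal_family D \<psi>" using eig unfolding is_eigendecomp_def by blast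
  note unit = orthonormal_family_norm[OF on]
  have d: "0 < d" unfolding d_def using macro_partition_block(2)[OF part \<mu>] by simp
  have p: "0 \<le> p n \<and> p n \<le> 1 \<and> c \<le> p n" if "n \<in> {..<D}" for n
    using macro_occupation_bounds[OF part \<mu> on deloc] that unfolding p_def c_def by auto
  have sum_p: "sum p {..<D} = d"
    unfolding p_def d_def by (rule sum_macro_occupation[OF part \<mu> on])
  have x: "0 \<le> x n \<and> mn \<le> x n" if "n \<in> {..<D}" for n
    using that qform_pos_part_bounds[OF on_\<psi> unit] unfolding x_def mn_def by auto
  have y: "0 \<le> y n \<and> y n \<le> mx" if "n \<in> {..<D}" for n
    using that qform_neg_part_bounds[OF on_\<psi> unit] unfolding y_def mx_def by auto
  have sum_x: "sum x {..<D} = Tp"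
    unfolding x_def Tp_def by (rule sum_qform_eq_mtrace[OF on])
  have sum_y: "sum y {..<D} = Tm"
    unfolding y_def Tm_def by (rule sum_qform_eq_mtrace[OF on])
  have "max (mn * d) (c * Tp) \<le> (\<Sum>n<D. p n * x n)"
    using weighted_sum_ge_max[of "{..<D}" p c x mn] p x unfolding sum_p sum_x by blast
  then have lower: "max mn (Tp / d * c) \<le> (\<Sum>n<D. p n * x n) / d"
    using d by (simp add: field_simps)
  have "(\<Sum>n<D. p n * y n) \<le> min (mx * d) Tm"
    using weighted_sum_le_min[of "{..<D}" p y mx] p y unfolding sum_p sum_y by blast
  then have upper: "(\<Sum>n<D. p n * y n) / d \<le> min mx (Tm / d)"
    using d by (simp add: field_simps)
  have "Mmu D a \<phi> \<mu> B = (\<Sum>n<D. p n * x n) / d - (\<Sum>n<D. p n * y n) / d"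
    unfolding Mmu_def qform_eq_pos_part_minus_neg_part[OF eig]
    by (simp add: p_def x_def y_def d_def right_diff_distrib sum_subtractf diff_divide_distrib)
  with lower upper show ?thesis unfolding mn_def mx_def Tp_def Tm_def d_def c_def by linarith
qed

lemma Mmu_proj_lower_bounds:
  assumes part: "macro_partition D K a" and \<mu>: "\<mu> < K" and \<nu>: "\<nu> < K"
    and on: "orthonormal_family D \<phi>"
    and deloc: "\<And>n j. n < D \<Longrightarrow> j < D \<Longrightarrow> (cmod (\<phi> n j))\<^sup>2 \<le> \<epsilon>"
  shows "real (bdim a \<nu>) / real (bdim a \<mu>) * (1 - real (D - bdim a \<mu>) * \<epsilon>) \<le> Mmu D a \<phi> \<mu> (proj a \<nu>)"
    and "1 - real (D - bdim a \<nu>) * \<epsilon> \<le> Mmu D a \<phi> \<mu> (proj a \<nu>)"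
proof -
  define p where "p \<kappa> n = qform D (proj a \<kappa>) (\<phi> n)" for \<kappa> n
  define c where "c \<kappa> = 1 - real (D - bdim a \<kappa>) * \<epsilon>" for \<kappa>
  have d: "0 < real (bdim a \<mu>)" using macro_partition_block(2)[OF part \<mu>] by simp
  have p: "0 \<le> p \<kappa> n \<and> c \<kappa> \<le> p \<kappa> n" if "\<kappa> < K" "n \<in> {..<D}" for \<kappa> n
    using macro_occupation_bounds[OF part _ on deloc] that unfolding p_def c_def by auto
  have "max (c \<nu> * real (bdim a \<mu>)) (c \<mu> * real (bdim a \<nu>)) \<le> (\<Sum>n<D. p \<mu> n * p \<nu> n)"
    using weighted_sum_ge_max[of "{..<D}" "p \<mu>" "c \<mu>" "p \<nu>" "c \<nu>"] p[OF \<mu>] p[OF \<nu>]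
    unfolding p_def sum_macro_occupation[OF part \<mu> on] sum_macro_occupation[OF part \<nu> on] by blast
  then show "real (bdim a \<nu>) / real (bdim a \<mu>) * c \<mu> \<le> Mmu D a \<phi> \<mu> (proj a \<nu>)"
    and "c \<nu> \<le> Mmu D a \<phi> \<mu> (proj a \<nu>)"
    using d unfolding Mmu_def p_def by (simp_all add: field_simps)
qed

lemma (in prob_space) prob_all_entries_le:
  fixes \<phi> :: "'a \<Rightarrow> nat \<Rightarrow> nat \<Rightarrow> complex"
  assumes meas: "\<And>n j. (\<lambda>\<omega>. \<phi> \<omega> n j) \<in> borel_measurable M"
    and tail: "\<And>n. n < D \<Longrightarrow> prob {\<omega>\<in>space M. sup_norm D (\<phi> \<omega> n) > r} \<le> \<delta>"
  shows "1 - real D * \<delta> \<le> prob {\<omega>\<in>space M. \<forall>n<D. \<forall>j<D. cmod (\<phi> \<omega> n j) \<le> r}"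
proof -
  define E where "E = {\<omega>\<in>space M. \<forall>n<D. \<forall>j<D. cmod (\<phi> \<omega> n j) \<le> r}"
  define bad where "bad n = {\<omega>\<in>space M. sup_norm D (\<phi> \<omega> n) > r}" for n
  have E: "E \<in> events" unfolding E_def using meas by measurable
  have bad: "bad n \<in> events" for n unfolding bad_def sup_norm_def using meas by measurable
  have "space M - E \<subseteq> (\<Union>n<D. bad n)"
  proof
    fix \<omega> assume "\<omega> \<in> space M - E"
    then obtain n j where "\<omega> \<in> space M" "n < D" "j < D" "r < cmod (\<phi> \<omega> n j)"
      unfolding E_def by (auto simp: not_le)
    moreover have "cmod (\<phi> \<omega> n j) \<le> sup_norm D (\<phi> \<omega> n)"
      unfolding sup_norm_def using \<open>j < D\<close> by (intro Max_ge) auto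
    ultimately show "\<omega> \<in> (\<Union>n<D. bad n)" unfolding bad_def by force
  qed
  then have "prob (space M - E) \<le> prob (\<Union>n<D. bad n)"
    using bad by (intro finite_measure_mono) auto
  also have "\<dots> \<le> (\<Sum>n<D. prob (bad n))"
    using bad by (intro finite_measure_subadditive_finite) auto
  also have "\<dots> \<le> real D * \<delta>"
    using sum_mono[of "{..<D}" "\<lambda>n. prob (bad n)" "\<lambda>_. \<delta>"] tail unfolding bad_def by simp
  finally show ?thesis using prob_compl[OF E] unfolding E_def by simp
qed

lemma powr_minus_half_sq:
  fixes x :: real
  assumes "0 \<le> x"
  shows "(x powr (t - 1/2))\<^sup>2 = 1 / x powr (1 - 2 * t)"
proof (cases "x = 0")
  case False
  then have "(x powr (t - 1/2))\<^sup>2 = x powr (- (1 - 2 * t))"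
    using assms by (simp add: power2_eq_square powr_add[symmetric])
  then show ?thesis by (simp only: powr_minus_divide)
qed simp

theorem mainTheorem12:
  fixes Ms :: "nat \<Rightarrow> 'w measure"
    and H :: "nat \<Rightarrow> 'w \<Rightarrow> nat \<Rightarrow> nat \<Rightarrow> complex"
    and \<phi> :: "nat \<Rightarrow> 'w \<Rightarrow> nat \<Rightarrow> nat \<Rightarrow> complex"
    and p P :: real and L :: nat and mus :: "nat \<Rightarrow> real"
    and D0 :: "real \<Rightarrow> real \<Rightarrow> nat"
    and \<tau> \<alpha> :: real and D K :: nat and a :: "nat \<Rightarrow> nat"
    and B \<psi> :: "nat \<Rightarrow> nat \<Rightarrow> complex" and \<beta> :: "nat \<Rightarrow> real"
  assumes params: "p > 0" "P > 0" "L \<ge> 1" "\<forall>k. mus k \<ge> 0"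
    and prob: "\<forall>D'. prob_space (Ms D')"
    and meas_H: "\<forall>D' i j. (\<lambda>\<omega>. H D' \<omega> i j) \<in> borel_measurable (Ms D')"
    and herm_H: "\<forall>D'. \<forall>\<omega>\<in>space (Ms D'). hermitian D' (H D' \<omega>)"
    and S1_centered: "\<forall>D'. \<forall>i<D'. \<forall>j<D'. (\<integral>\<omega>. H D' \<omega> i j \<partial>Ms D') = 0"
    and S1_indep: "\<forall>D'. prob_space.indep_vars (Ms D') (\<lambda>_. borel)
                       (\<lambda>(i,j) \<omega>. H D' \<omega> i j) {(i,j). i \<le> j \<and> j < D'}"
    and S1_var: "\<forall>D'. \<forall>i<D'. \<forall>j<D'.
                   (\<integral>\<^sup>+ \<omega>. ennreal ((cmod (H D' \<omega> i j))\<^sup>2) \<partial>Ms D') \<le> ennreal (1 / real D')"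
    and S2: "\<forall>D'. \<forall>i<D'. \<forall>j<D'. matpow D' (sigma2 (Ms D') (H D')) L i j \<ge> p / real D'"
    and S3: "\<forall>D'. dyson_bounded D' (sigma2 (Ms D') (H D')) P"
    and S4: "\<forall>D' k. \<forall>i<D'. \<forall>j<D'.
               (\<integral>\<^sup>+ \<omega>. ennreal ((cmod (H D' \<omega> i j)) ^ k) \<partial>Ms D')
                 \<le> ennreal (mus k * (sqrt (sigma2 (Ms D') (H D') i j)) ^ k)"
    and meas_phi: "\<forall>D' n j. (\<lambda>\<omega>. \<phi> D' \<omega> n j) \<in> borel_measurable (Ms D')"
    and eig_phi: "\<forall>D'. \<forall>\<omega>\<in>space (Ms D'). is_eigenbasis D' (H D' \<omega>) (\<phi> D' \<omega>)"
    and deloc: "\<forall>t>0. \<forall>s>0. \<forall>D'\<ge>D0 t s. \<forall>n<D'.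
        measure (Ms D') {\<omega>\<in>space (Ms D'). sup_norm D' (\<phi> D' \<omega> n) > real D' powr (t - 1/2)}
          \<le> real D' powr (- s)"
    and tau: "\<tau> > 0" and alpha: "\<alpha> > 1" and DD0: "D \<ge> D0 \<tau> \<alpha>"
    and part: "macro_partition D K a"
    and herm_B: "hermitian D B"
    and eig_B: "is_eigendecomp D B \<psi> \<beta>"
  shows "\<exists>E\<in>sets (Ms D). measure (Ms D) E \<ge> 1 - real D powr (1 - \<alpha>) \<and>
     (\<forall>\<omega>\<in>E.
       (\<forall>\<mu><K.
          \<bar>Mmu D a (\<phi> D \<omega>) \<mu> B\<bar> \<ge>
            max (Min (real_eigenvalues D (pos_part D \<psi> \<beta>)))
                (Re (mtrace D (pos_part D \<psi> \<beta>)) / real (bdim a \<mu>)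
                   * (1 - real (D - bdim a \<mu>) / real D powr (1 - 2 * \<tau>)))
            - min (Max (real_eigenvalues D (neg_part D \<psi> \<beta>)))
                  (Re (mtrace D (neg_part D \<psi> \<beta>)) / real (bdim a \<mu>))) \<and>
       (\<forall>\<mu><K. \<forall>\<nu><K.
          Mmu D a (\<phi> D \<omega>) \<mu> (proj a \<nu>) \<ge>
            real (bdim a \<nu>) / real (bdim a \<mu>) * (1 - real (D - bdim a \<mu>) / real D powr (1 - 2 * \<tau>)) \<and>
          Mmu D a (\<phi> D \<omega>) \<mu> (proj a \<nu>) \<ge>
            1 - real (D - bdim a \<nu>) / real D powr (1 - 2 * \<tau>)))"
proof -
  interpret M: prob_space "Ms D" using prob by blast
  define r where "r = real D powr (\<tau> - 1/2)"
  define \<epsilon> where "\<epsilon> = 1 / real D powr (1 - 2 * \<tau>)"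
  define E where "E = {\<omega>\<in>space (Ms D). \<forall>n<D. \<forall>j<D. cmod (\<phi> D \<omega> n j) \<le> r}"
  have meas: "\<And>n j. (\<lambda>\<omega>. \<phi> D \<omega> n j) \<in> borel_measurable (Ms D)" using meas_phi by blast
  have E_sets: "E \<in> sets (Ms D)" unfolding E_def using meas by measurable
  have "1 - real D * real D powr (- \<alpha>) \<le> measure (Ms D) E"
    unfolding E_def r_def using deloc tau alpha DD0 by (intro M.prob_all_entries_le meas) auto
  then have E_prob: "1 - real D powr (1 - \<alpha>) \<le> measure (Ms D) E"
    by (cases "D = 0") (simp_all add: powr_diff powr_minus divide_inverse)
  have on: "orthonormal_family D (\<phi> D \<omega>)" if "\<omega> \<in> E" for \<omega>
    using that eig_phi unfolding E_def is_eigenbasis_def by blast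
  have delocalized: "(cmod (\<phi> D \<omega> n j))\<^sup>2 \<le> \<epsilon>" if "\<omega> \<in> E" "n < D" "j < D" for \<omega> n j
    using that power_mono[of _ r 2] powr_minus_half_sq[of "real D" \<tau>]
    unfolding E_def r_def \<epsilon>_def by auto
  have \<epsilon>_scale: "real d * \<epsilon> = real d / real D powr (1 - 2 * \<tau>)" for d
    unfolding \<epsilon>_def by simp
  show ?thesis
    using E_sets E_prob on delocalized \<epsilon>_scale
      Mmu_observable_lower_bound[OF part _ eig_B, where \<epsilon> = \<epsilon>]
      Mmu_proj_lower_bounds[OF part, where \<epsilon> = \<epsilon>]
    by (intro bexI[of _ E]) (auto intro: order_trans[OF _ abs_ge_self])
qed

end
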